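(* Let $M,N,P$ be regular languages over $\Sigma$ with state complexities $m,n,p\geq 3$ respectively. Then $$\mathrm{sc}(M\cdot(N\oplus P))\leq (m-1)\alpha_{n,p}+\alpha'_{n,p}.$$
   Context: $\mathrm{sc}(L)$ is the number of states of the minimal complete DFA of $L$; $\oplus$ is symmetric difference and $\cdot$ is concatenation. An $n\times p$ tableau is a subset $S$ of an $n\times p$ grid of cells; it is saturated if whenever cells $(x,x'),(x,y'),(y,y')$ are in $S$ then $(y,x')\in S$. $\alpha_{n,p}$ denotes the number of saturated $n\times p$ tableaux, and $\alpha'_{n,p}$ the number of saturated $n\times p$ tableaux containing a fixed given cell (this number does not depend on the cell). *)

theory Defs
  imports Main
begin

definition is_dfa :: "'a set \<Rightarrow> nat \<Rightarrow> nat \<Rightarrow> (nat \<Rightarrow> 'a \<Rightarrow> nat) \<Rightarrow> nat set \<Rightarrow> bool" where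
  "is_dfa \<Sigma> k q0 \<delta> F \<longleftrightarrow> q0 < k \<and> (\<forall>q<k. \<forall>a\<in>\<Sigma>. \<delta> q a < k) \<and> F \<subseteq> {..<k}"

definition dfa_lang :: "'a set \<Rightarrow> nat \<Rightarrow> (nat \<Rightarrow> 'a \<Rightarrow> nat) \<Rightarrow> nat set \<Rightarrow> 'a list set" where
  "dfa_lang \<Sigma> q0 \<delta> F = {w \<in> lists \<Sigma>. foldl \<delta> q0 w \<in> F}"

definition regular_lang :: "'a set \<Rightarrow> 'a list set \<Rightarrow> bool" where
  "regular_lang \<Sigma> L \<longleftrightarrow> (\<exists>k q0 \<delta> F. is_dfa \<Sigma> k q0 \<delta> F \<and> dfa_lang \<Sigma> q0 \<delta> F = L)"

definition sc :: "'a set \<Rightarrow> 'a list set \<Rightarrow> nat" where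
  "sc \<Sigma> L = (LEAST k. \<exists>q0 \<delta> F. is_dfa \<Sigma> k q0 \<delta> F \<and> dfa_lang \<Sigma> q0 \<delta> F = L)"

definition lang_conc :: "'a list set \<Rightarrow> 'a list set \<Rightarrow> 'a list set" where
  "lang_conc A B = {u @ v | u v. u \<in> A \<and> v \<in> B}"

definition sym_diff :: "'a list set \<Rightarrow> 'a list set \<Rightarrow> 'a list set" where
  "sym_diff A B = (A - B) \<union> (B - A)"

definition saturated :: "(nat \<times> nat) set \<Rightarrow> bool" where
  "saturated S \<longleftrightarrow> (\<forall>x y x' y'. (x, x') \<in> S \<and> (x, y') \<in> S \<and> (y, y') \<in> S \<longrightarrow> (y, x') \<in> S)"

definition alpha :: "nat \<Rightarrow> nat \<Rightarrow> nat" where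
  "alpha n p = card {S. S \<subseteq> {0..<n} \<times> {0..<p} \<and> saturated S}"

text \<open>Number of saturated tableaux containing a fixed cell; we fix the cell \<open>(0,0)\<close>.\<close>
definition alpha' :: "nat \<Rightarrow> nat \<Rightarrow> nat" where
  "alpha' n p = card {S. S \<subseteq> {0..<n} \<times> {0..<p} \<and> saturated S \<and> (0, 0) \<in> S}"

end

theory Submission
  imports Defs "HOL.Hull" "HOL-Combinatorics.Transposition"
begin

text \<open>
  Run DFAs for \<open>M\<close>, \<open>N\<close> and \<open>P\<close> in parallel. After reading a prefix, a suffix \<open>v\<close>
  completes it to a word of \<open>M \<cdot> (N \<oplus> P)\<close> iff for some factorisation of the prefix as
  \<open>u u'\<close> with \<open>u \<in> M\<close>, the pair of states \<open>(x, y)\<close> that \<open>u' v\<close> reaches in the DFAs of \<open>N\<close>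
  and \<open>P\<close> satisfies \<open>x \<in> F\<^sub>N \<noteq> y \<in> F\<^sub>P\<close>. Hence it suffices to remember the state of \<open>M\<close>
  and the set of cells reached by all such \<open>u'\<close>. This condition is a parity condition, so
  if it fails on the cells \<open>(x, x')\<close>, \<open>(x, y')\<close>, \<open>(y, y')\<close> it fails on \<open>(y, x')\<close> too:
  the set of cells may be replaced by its saturation. That leaves \<open>\<alpha>\<^sub>n\<^sub>,\<^sub>p\<close> tableaux for
  each state of \<open>M\<close>, and at most \<open>\<alpha>'\<^sub>n\<^sub>,\<^sub>p\<close> for each final state of \<open>M\<close>, where the
  tableau must contain the cell of the two initial states.
\<close>

lemma sc_le_card:
  fixes Q :: "'s set" and \<delta> :: "'s \<Rightarrow> 'a \<Rightarrow> 's"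
  assumes fin: "finite Q" and s0: "s0 \<in> Q" and cl: "\<And>s a. s \<in> Q \<Longrightarrow> a \<in> \<Sigma> \<Longrightarrow> \<delta> s a \<in> Q"
  shows "sc \<Sigma> {w \<in> lists \<Sigma>. foldl \<delta> s0 w \<in> F} \<le> card Q"
proof -
  obtain f where bij: "bij_betw f Q {0..<card Q}" using ex_bij_betw_finite_nat[OF fin] by blast
  have inj: "inj_on f Q" and img: "f ` Q = {0..<card Q}" using bij by (auto simp: bij_betw_def)
  define \<delta>' where "\<delta>' = (\<lambda>i a. f (\<delta> (the_inv_into Q f i) a))"
  have run: "foldl \<delta>' (f s) w = f (foldl \<delta> s w) \<and> foldl \<delta> s w \<in> Q" if "s \<in> Q" "w \<in> lists \<Sigma>" for s w
    using that
  proof (induction w arbitrary: s)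
    case (Cons a w)
    then have "\<delta> s a \<in> Q" and "\<delta>' (f s) a = f (\<delta> s a)"
      using cl inj by (auto simp: \<delta>'_def the_inv_into_f_f)
    with Cons show ?case by simp
  qed simp
  have dfa: "is_dfa \<Sigma> (card Q) (f s0) \<delta>' (f ` (F \<inter> Q))"
    unfolding is_dfa_def
  proof (intro conjI allI impI ballI)
    fix q a assume "q < card Q" "a \<in> \<Sigma>"
    then obtain s where "s \<in> Q" "q = f s" using img by (metis atLeastLessThan_iff imageE zero_le)
    then show "\<delta>' q a < card Q" using img cl \<open>a \<in> \<Sigma>\<close> inj by (auto simp: \<delta>'_def the_inv_into_f_f)
  qed (use s0 img in auto)
  have "foldl \<delta>' (f s0) w \<in> f ` (F \<inter> Q) \<longleftrightarrow> foldl \<delta> s0 w \<in> F" if "w \<in> lists \<Sigma>" for w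
    using run[OF s0 that] inj by (auto simp: inj_on_image_mem_iff)
  then have "dfa_lang \<Sigma> (f s0) \<delta>' (f ` (F \<inter> Q)) = {w \<in> lists \<Sigma>. foldl \<delta> s0 w \<in> F}"
    unfolding dfa_lang_def by auto
  with dfa show ?thesis unfolding sc_def by (intro Least_le) blast
qed

lemma sc_empty_le_1: "sc \<Sigma> {} \<le> 1"
  using sc_le_card[of "{()}" "()" \<Sigma> "\<lambda>_ _. ()" "{}"] by simp

lemma regular_lang_sc_dfa:
  assumes "regular_lang \<Sigma> L"
  obtains q0 \<delta> F where "is_dfa \<Sigma> (sc \<Sigma> L) q0 \<delta> F" "dfa_lang \<Sigma> q0 \<delta> F = L"
  using LeastI_ex[OF assms[unfolded regular_lang_def]] unfolding sc_def by blast

lemma saturated_Times: "saturated (A \<times> B)"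
  unfolding saturated_def by auto

lemma saturated_Inter: "\<forall>S \<in> \<S>. saturated S \<Longrightarrow> saturated (\<Inter>\<S>)"
  unfolding saturated_def by blast

lemma saturated_saturated_hull: "saturated (saturated hull X)"
  by (rule hull_in) (rule saturated_Inter)

lemma saturated_pairs_eq:
  fixes f g :: "nat \<Rightarrow> bool"
  shows "saturated {(x, y). f x = g y}"
  unfolding saturated_def
proof (intro allI impI)
  fix x y x' y' assume "(x, x') \<in> {(x, y). f x = g y} \<and> (x, y') \<in> {(x, y). f x = g y}
    \<and> (y, y') \<in> {(x, y). f x = g y}"
  then have "f y = g y'" "g y' = f x" "f x = g x'" by auto
  then show "(y, x') \<in> {(x, y). f x = g y}" by simp
qed

lemma ex_xor_saturated_hull:
  fixes f g :: "nat \<Rightarrow> bool"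
  shows "(\<exists>(x, y) \<in> saturated hull X. f x \<noteq> g y) \<longleftrightarrow> (\<exists>(x, y) \<in> X. f x \<noteq> g y)"
proof (cases "\<exists>(x, y) \<in> X. f x \<noteq> g y")
  case False
  then have "saturated hull X \<subseteq> {(x, y). f x = g y}"
    by (intro hull_minimal saturated_pairs_eq) auto
  with False show ?thesis by auto
next
  case True
  then show ?thesis using hull_inc[of _ X saturated] by fastforce
qed

lemma saturated_vimage_map_prod:
  assumes "saturated S"
  shows "saturated (map_prod f g -` S)"
  unfolding saturated_def
proof (intro allI impI)
  fix x y x' y'
  assume "(x, x') \<in> map_prod f g -` S \<and> (x, y') \<in> map_prod f g -` S \<and> (y, y') \<in> map_prod f g -` S"
  then have "(f x, g x') \<in> S \<and> (f x, g y') \<in> S \<and> (f y, g y') \<in> S" by simp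
  then have "(f y, g x') \<in> S" using assms unfolding saturated_def by blast
  then show "(y, x') \<in> map_prod f g -` S" by simp
qed

lemma card_saturated_containing_le_alpha':
  assumes "a < n" "b < p"
  shows "card {S. S \<subseteq> {0..<n} \<times> {0..<p} \<and> saturated S \<and> (a, b) \<in> S} \<le> alpha' n p"
  unfolding alpha'_def
proof (rule card_inj_on_le)
  let ?h = "map_prod (transpose a 0) (transpose b (0::nat))"
  have "surj ?h" by (simp add: map_prod_surj)
  then have "?h ` (?h -` S) = S" for S by (rule surj_image_vimage_eq)
  then show "inj_on (vimage ?h) {S. S \<subseteq> {0..<n} \<times> {0..<p} \<and> saturated S \<and> (a, b) \<in> S}"
    by (rule inj_on_inverseI)
  have grid: "?h -` ({0..<n} \<times> {0..<p}) = {0..<n} \<times> {0..<p}"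
    using assms by (auto simp: transpose_def split: if_splits)
  show "vimage ?h ` {S. S \<subseteq> {0..<n} \<times> {0..<p} \<and> saturated S \<and> (a, b) \<in> S}
      \<subseteq> {S. S \<subseteq> {0..<n} \<times> {0..<p} \<and> saturated S \<and> (0, 0) \<in> S}"
  proof clarify
    fix S assume S: "S \<subseteq> {0..<n} \<times> {0..<p}" "saturated S" "(a, b) \<in> S"
    have "?h -` S \<subseteq> {0..<n} \<times> {0..<p}" using vimage_mono[OF S(1), of ?h] unfolding grid .
    moreover have "saturated (?h -` S)" using S(2) by (rule saturated_vimage_map_prod)
    ultimately show "?h -` S \<subseteq> {0..<n} \<times> {0..<p} \<and> saturated (?h -` S) \<and> (0, 0) \<in> ?h -` S"
      using S(3) by simp
  qed
  show "finite {S. S \<subseteq> {0..<n} \<times> {0..<p} \<and> saturated S \<and> (0, 0) \<in> S}"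
    by (rule finite_subset[of _ "Pow ({0..<n} \<times> {0..<p})"]) auto
qed

lemma alpha'_le_alpha: "alpha' n p \<le> alpha n p"
  unfolding alpha'_def alpha_def
  by (rule card_mono) (auto intro: finite_subset[of _ "Pow ({0..<n} \<times> {0..<p})"])

lemma alpha'_pos:
  assumes "n > 0" "p > 0"
  shows "alpha' n p > 0"
proof -
  have "{0..<n} \<times> {0..<p} \<in> {S. S \<subseteq> {0..<n} \<times> {0..<p} \<and> saturated S \<and> (0, 0) \<in> S}"
    using assms saturated_Times by auto
  moreover have "finite {S. S \<subseteq> {0..<n} \<times> {0..<p} \<and> saturated S \<and> (0, 0) \<in> S}"
    by (rule finite_subset[of _ "Pow ({0..<n} \<times> {0..<p})"]) auto
  ultimately show ?thesis unfolding alpha'_def by (auto simp: card_gt_0_iff)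
qed

lemma ex_append_Cons_nonempty:
  "(\<exists>u v. a # w = u @ v \<and> u \<noteq> [] \<and> P u v) \<longleftrightarrow> (\<exists>u v. w = u @ v \<and> P (a # u) v)"
  by (auto simp: Cons_eq_append_conv)

lemma ex_append_split_Nil:
  "(\<exists>u v. w = u @ v \<and> P u v) \<longleftrightarrow> P [] w \<or> (\<exists>u v. w = u @ v \<and> u \<noteq> [] \<and> P u v)"
  by (metis append_Nil)

locale conc_sym_diff_dfas =
  fixes \<Sigma> :: "'a set"
    and m qM dM FM n qN dN FN p qP dP FP
  assumes dfa_M: "is_dfa \<Sigma> m qM dM FM"
    and dfa_N: "is_dfa \<Sigma> n qN dN FN"
    and dfa_P: "is_dfa \<Sigma> p qP dP FP"
begin

definition grid :: "(nat \<times> nat) set" where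
  "grid = {0..<n} \<times> {0..<p}"

definition accepts_from :: "(nat \<times> nat) set \<Rightarrow> 'a list \<Rightarrow> bool" where
  "accepts_from S v \<longleftrightarrow> (\<exists>(x, y) \<in> S. (foldl dN x v \<in> FN) \<noteq> (foldl dP y v \<in> FP))"

definition shift :: "(nat \<times> nat) set \<Rightarrow> 'a \<Rightarrow> (nat \<times> nat) set" where
  "shift S a = map_prod (\<lambda>x. dN x a) (\<lambda>y. dP y a) ` S"

definition seed :: "nat \<Rightarrow> (nat \<times> nat) set" where
  "seed q = (if q \<in> FM then {(qN, qP)} else {})"

fun step :: "nat \<times> (nat \<times> nat) set \<Rightarrow> 'a \<Rightarrow> nat \<times> (nat \<times> nat) set" where
  "step (q, S) a = (dM q a, saturated hull (shift S a \<union> seed (dM q a)))"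

definition init :: "nat \<times> (nat \<times> nat) set" where
  "init = (qM, saturated hull seed qM)"

definition final :: "(nat \<times> (nat \<times> nat) set) set" where
  "final = {(q, S). accepts_from S []}"

definition states :: "(nat \<times> (nat \<times> nat) set) set" where
  "states = {(q, S). q < m \<and> S \<subseteq> grid \<and> saturated S \<and> (q \<in> FM \<longrightarrow> (qN, qP) \<in> S)}"

lemma accepts_from_hull: "accepts_from (saturated hull X) v \<longleftrightarrow> accepts_from X v"
  unfolding accepts_from_def by (rule ex_xor_saturated_hull)

lemma accepts_from_shift: "accepts_from (shift S a) v \<longleftrightarrow> accepts_from S (a # v)"
proof -
  have "(\<exists>c \<in> f ` S. P c) \<longleftrightarrow> (\<exists>c \<in> S. P (f c))" for f :: "nat \<times> nat \<Rightarrow> nat \<times> nat" and P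
    by blast
  then show ?thesis unfolding accepts_from_def shift_def by (simp add: split_beta)
qed

lemma accepts_from_Un: "accepts_from (A \<union> B) v \<longleftrightarrow> accepts_from A v \<or> accepts_from B v"
  unfolding accepts_from_def by blast

lemma accepts_from_seed: "accepts_from (seed q) v \<longleftrightarrow> q \<in> FM \<and> accepts_from {(qN, qP)} v"
  unfolding accepts_from_def seed_def by auto

lemma final_run_iff:
  "foldl step (q, S) w \<in> final \<longleftrightarrow>
    accepts_from S w \<or> (\<exists>u v. w = u @ v \<and> u \<noteq> [] \<and> foldl dM q u \<in> FM \<and> accepts_from {(qN, qP)} v)"
proof (induction w arbitrary: q S)
  case Nil
  then show ?case by (simp add: final_def)
next
  case (Cons a w)
  have "foldl step (q, S) (a # w) \<in> final \<longleftrightarrow>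
      accepts_from S (a # w) \<or> (dM q a \<in> FM \<and> accepts_from {(qN, qP)} w)
      \<or> (\<exists>u v. w = u @ v \<and> u \<noteq> [] \<and> foldl dM (dM q a) u \<in> FM \<and> accepts_from {(qN, qP)} v)"
    using Cons.IH by (simp add: accepts_from_hull accepts_from_Un accepts_from_shift accepts_from_seed)
  also have "\<dots> \<longleftrightarrow> accepts_from S (a # w) \<or>
      (\<exists>u v. a # w = u @ v \<and> u \<noteq> [] \<and> foldl dM q u \<in> FM \<and> accepts_from {(qN, qP)} v)"
    unfolding ex_append_Cons_nonempty foldl_Cons
    using ex_append_split_Nil[where P = "\<lambda>u v. foldl dM (dM q a) u \<in> FM \<and> accepts_from {(qN, qP)} v"]
    by auto
  finally show ?case .
qed

lemma final_run_init_iff: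
  "foldl step init w \<in> final \<longleftrightarrow>
    (\<exists>u v. w = u @ v \<and> foldl dM qM u \<in> FM \<and> accepts_from {(qN, qP)} v)"
  using ex_append_split_Nil[where P = "\<lambda>u v. foldl dM qM u \<in> FM \<and> accepts_from {(qN, qP)} v"]
  by (simp add: init_def final_run_iff accepts_from_hull accepts_from_seed)

lemma mem_lang_conc_sym_diff_iff:
  "w \<in> lang_conc (dfa_lang \<Sigma> qM dM FM) (sym_diff (dfa_lang \<Sigma> qN dN FN) (dfa_lang \<Sigma> qP dP FP))
    \<longleftrightarrow> w \<in> lists \<Sigma> \<and> (\<exists>u v. w = u @ v \<and> foldl dM qM u \<in> FM \<and> accepts_from {(qN, qP)} v)"
  (is "_ \<longleftrightarrow> _ \<and> (\<exists>u v. ?split u v)")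
proof -
  have sym_diff_iff: "v \<in> sym_diff (dfa_lang \<Sigma> qN dN FN) (dfa_lang \<Sigma> qP dP FP)
      \<longleftrightarrow> v \<in> lists \<Sigma> \<and> accepts_from {(qN, qP)} v" for v
    unfolding sym_diff_def dfa_lang_def accepts_from_def by auto
  show ?thesis
  proof
    assume "w \<in> lang_conc (dfa_lang \<Sigma> qM dM FM) (sym_diff (dfa_lang \<Sigma> qN dN FN) (dfa_lang \<Sigma> qP dP FP))"
    then obtain u v where "w = u @ v" "u \<in> dfa_lang \<Sigma> qM dM FM"
      and "v \<in> sym_diff (dfa_lang \<Sigma> qN dN FN) (dfa_lang \<Sigma> qP dP FP)"
      unfolding lang_conc_def by blast
    then have "w \<in> lists \<Sigma>" "?split u v" using sym_diff_iff by (auto simp: dfa_lang_def)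
    then show "w \<in> lists \<Sigma> \<and> (\<exists>u v. ?split u v)" by blast
  next
    assume "w \<in> lists \<Sigma> \<and> (\<exists>u v. ?split u v)"
    then obtain u v where "w \<in> lists \<Sigma>" "?split u v" by blast
    then have "u \<in> dfa_lang \<Sigma> qM dM FM" "v \<in> sym_diff (dfa_lang \<Sigma> qN dN FN) (dfa_lang \<Sigma> qP dP FP)"
      using sym_diff_iff by (auto simp: dfa_lang_def)
    with \<open>?split u v\<close> show "w \<in> lang_conc (dfa_lang \<Sigma> qM dM FM) (sym_diff (dfa_lang \<Sigma> qN dN FN) (dfa_lang \<Sigma> qP dP FP))"
      unfolding lang_conc_def by blast
  qed
qed

lemma lang_run_eq:
  "{w \<in> lists \<Sigma>. foldl step init w \<in> final} =
    lang_conc (dfa_lang \<Sigma> qM dM FM) (sym_diff (dfa_lang \<Sigma> qN dN FN) (dfa_lang \<Sigma> qP dP FP))"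
  by (rule set_eqI) (simp add: mem_lang_conc_sym_diff_iff final_run_init_iff)

lemma grid_saturated_hull: "X \<subseteq> grid \<Longrightarrow> saturated hull X \<subseteq> grid"
  unfolding grid_def by (intro hull_minimal saturated_Times)

lemma seed_subset_grid: "seed q \<subseteq> grid"
  using dfa_N dfa_P by (auto simp: seed_def grid_def is_dfa_def)

lemma shift_subset_grid: "S \<subseteq> grid \<Longrightarrow> a \<in> \<Sigma> \<Longrightarrow> shift S a \<subseteq> grid"
  using dfa_N dfa_P by (auto simp: shift_def grid_def is_dfa_def)

lemma seed_in_hull: "q \<in> FM \<Longrightarrow> (qN, qP) \<in> saturated hull (X \<union> seed q)"
  by (auto simp: seed_def intro: hull_inc)

lemma init_in_states: "init \<in> states"
  using seed_in_hull[of qM "{}"] grid_saturated_hull[OF seed_subset_grid] dfa_M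
  by (auto simp: init_def states_def is_dfa_def saturated_saturated_hull)

lemma step_in_states:
  assumes "s \<in> states" "a \<in> \<Sigma>"
  shows "step s a \<in> states"
proof -
  obtain q S where s: "s = (q, S)" "q < m" "S \<subseteq> grid" using assms(1) by (auto simp: states_def)
  have "dM q a < m" using dfa_M s assms(2) by (auto simp: is_dfa_def)
  moreover have "saturated hull (shift S a \<union> seed (dM q a)) \<subseteq> grid"
    using shift_subset_grid[OF s(3) assms(2)] seed_subset_grid by (intro grid_saturated_hull) auto
  ultimately show ?thesis
    using seed_in_hull s(1) by (auto simp: states_def saturated_saturated_hull)
qed

lemma finite_states: "finite states"
  by (rule finite_subset[of _ "{..<m} \<times> Pow grid"]) (auto simp: states_def grid_def)

lemma card_states_le:
  assumes "FM \<noteq> {}"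
  shows "card states \<le> (m - 1) * alpha n p + alpha' n p"
proof -
  define T where "T = {S. S \<subseteq> grid \<and> saturated S}"
  define T0 where "T0 = {S. S \<subseteq> grid \<and> saturated S \<and> (qN, qP) \<in> S}"
  define k where "k = card FM"
  have "finite T" unfolding T_def grid_def by (rule finite_subset[of _ "Pow ({0..<n} \<times> {0..<p})"]) auto
  moreover have "T0 \<subseteq> T" unfolding T_def T0_def by auto
  moreover have FM: "FM \<subseteq> {0..<m}" using dfa_M by (auto simp: is_dfa_def)
  ultimately have fin: "finite (({0..<m} - FM) \<times> T)" "finite (FM \<times> T0)"
    by (auto intro: finite_subset)
  have k: "1 \<le> k" "k \<le> m"
    using assms FM card_mono[OF _ FM] by (auto simp: k_def Suc_le_eq card_gt_0_iff finite_subset)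
  have T: "card T = alpha n p" unfolding T_def grid_def alpha_def ..
  have T0: "card T0 \<le> alpha' n p"
    unfolding T0_def grid_def using dfa_N dfa_P
    by (intro card_saturated_containing_le_alpha') (auto simp: is_dfa_def)
  have "states \<subseteq> (({0..<m} - FM) \<times> T) \<union> (FM \<times> T0)"
    by (auto simp: states_def T_def T0_def)
  then have "card states \<le> card (({0..<m} - FM) \<times> T) + card (FM \<times> T0)"
    using fin by (meson card_Un_le card_mono finite_UnI order_trans)
  also have "\<dots> = (m - k) * alpha n p + k * card T0"
    using FM by (simp add: card_cartesian_product card_Diff_subset finite_subset T k_def)
  also have "\<dots> \<le> (m - k) * alpha n p + (k - 1) * alpha n p + alpha' n p"
  proof -
    have "(k - 1) * card T0 \<le> (k - 1) * alpha n p"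
      by (rule mult_le_mono2) (rule order_trans[OF T0 alpha'_le_alpha])
    moreover have "k * card T0 = (k - 1) * card T0 + card T0" using k(1) by (cases k) auto
    ultimately have "k * card T0 \<le> (k - 1) * alpha n p + alpha' n p"
      using T0 by linarith
    then show ?thesis by simp
  qed
  also have "\<dots> = (m - 1) * alpha n p + alpha' n p"
    using k by (simp add: add_mult_distrib[symmetric])
  finally show ?thesis .
qed

end

theorem theorem1:
  fixes \<Sigma> :: "'a set" and M N P :: "'a list set" and m n p :: nat
  assumes "finite \<Sigma>"
    and "regular_lang \<Sigma> M" and "regular_lang \<Sigma> N" and "regular_lang \<Sigma> P"
    and "sc \<Sigma> M = m" and "sc \<Sigma> N = n" and "sc \<Sigma> P = p"
    and "m \<ge> 3" and "n \<ge> 3" and "p \<ge> 3"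
  shows "sc \<Sigma> (lang_conc M (sym_diff N P)) \<le> (m - 1) * alpha n p + alpha' n p"
proof -
  obtain qM dM FM where M: "is_dfa \<Sigma> m qM dM FM" "dfa_lang \<Sigma> qM dM FM = M"
    using regular_lang_sc_dfa[OF assms(2)] assms(5) by blast
  obtain qN dN FN where N: "is_dfa \<Sigma> n qN dN FN" "dfa_lang \<Sigma> qN dN FN = N"
    using regular_lang_sc_dfa[OF assms(3)] assms(6) by blast
  obtain qP dP FP where P: "is_dfa \<Sigma> p qP dP FP" "dfa_lang \<Sigma> qP dP FP = P"
    using regular_lang_sc_dfa[OF assms(4)] assms(7) by blast
  interpret conc_sym_diff_dfas \<Sigma> m qM dM FM n qN dN FN p qP dP FP
    using M N P by unfold_locales
  show ?thesis
  proof (cases "FM = {}")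
    case True
    then have "lang_conc M (sym_diff N P) = {}"
      using M(2) by (auto simp: lang_conc_def dfa_lang_def)
    then show ?thesis
      using sc_empty_le_1[of \<Sigma>] alpha'_pos[of n p] assms(9,10) by simp
  next
    case False
    have "sc \<Sigma> (lang_conc M (sym_diff N P)) = sc \<Sigma> {w \<in> lists \<Sigma>. foldl step init w \<in> final}"
      using lang_run_eq M(2) N(2) P(2) by simp
    also have "\<dots> \<le> card states"
      by (rule sc_le_card[OF finite_states init_in_states step_in_states])
    also have "\<dots> \<le> (m - 1) * alpha n p + alpha' n p"
      by (rule card_states_le[OF False])
    finally show ?thesis .
  qed
qed

end
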